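(* Let $q=2^h$ with $h\equiv 1\pmod 2$ and let $$U=\left\{\left(x,\,y,\,x^q+y^{q^2},\,x^{q^2}+y^q+y^{q^2}\right): x,y\in\mathbb F_{q^4}\right\}\subseteq\mathbb F_{q^4}^4.$$ Then $U$ is $(2,3)_q$-evasive, i.e. $\dim_{\mathbb F_q}(U\cap H)\le 3$ for every $2$-dimensional $\mathbb F_{q^4}$-subspace $H$ of $\mathbb F_{q^4}^4$.
   Context: $U$ is an $\mathbb F_q$-subspace of $\mathbb F_{q^4}^4$ of $\mathbb F_q$-dimension $8$. *)

theory Defs
  imports "HOL-Analysis.Finite_Cartesian_Product"
begin

definition vec4 :: "'a \<Rightarrow> 'a \<Rightarrow> 'a \<Rightarrow> 'a \<Rightarrow> 'a ^ 4" where
  "vec4 a b c d = (\<chi> i. if i = 0 then a else if i = 1 then b else if i = 2 then c else d)"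

definition lin_indep_over :: "'a::field set \<Rightarrow> nat \<Rightarrow> (nat \<Rightarrow> 'a ^ 'n) \<Rightarrow> bool" where
  "lin_indep_over K n v \<longleftrightarrow>
     (\<forall>c. (\<forall>i<n. c i \<in> K) \<longrightarrow> (\<Sum>i<n. c i *s v i) = 0 \<longrightarrow> (\<forall>i<n. c i = 0))"

definition subspace_over :: "'a::field set \<Rightarrow> ('a ^ 'n) set \<Rightarrow> bool" where
  "subspace_over K S \<longleftrightarrow> 0 \<in> S \<and> (\<forall>x\<in>S. \<forall>y\<in>S. x + y \<in> S) \<and> (\<forall>c\<in>K. \<forall>x\<in>S. c *s x \<in> S)"

definition dim_over :: "'a::field set \<Rightarrow> ('a ^ 'n) set \<Rightarrow> nat" where
  "dim_over K S = (GREATEST n. \<exists>v. (\<forall>i<n. v i \<in> S) \<and> lin_indep_over K n v)"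

text \<open>The subfield F_q of a field of order q^4: the fixed points of x \<mapsto> x^q.\<close>
definition subfield_Fq :: "nat \<Rightarrow> 'a::field set" where
  "subfield_Fq q = {x. x ^ q = x}"

end

theory Submission
  imports Defs "HOL-Analysis.Cartesian_Space" "HOL-Number_Theory.Residues"
begin

text \<open>
  Suppose U \<inter> H contained four F_q-independent vectors with first two coordinates
  (x_j, y_j). Points of U depend F_q-linearly on these coordinates, so the pairs
  (x_j, y_j) are F_q-independent as well.

  If H projects isomorphically onto the first two coordinates, it is the graph of
  (x, y) \<mapsto> (a x + b y, c x + d y), and every pair satisfies two q-linearised equations.
  Together with their Frobenius conjugates, these equations express x_j, y_j, x_j^(q^2), y_j^(q^2)
  linearly in u_j = (x_j^q, y_j^q, x_j^(q^3), y_j^(q^3)). Hence the linear relations among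
  the u_j are closed under Frobenius, and a Moore-type argument makes the u_j linearly
  independent. The four remaining equations are linear relations among the u_j, so all their
  coefficients vanish. This forces c = b, d = a + b, b^q = b + 1 and b^4 + b + 1 = 0, which is
  impossible for odd h.

  Otherwise H is spanned by some p and some v \<noteq> 0 whose first two coordinates vanish.
  Writing the points as l_j p + m_j v and eliminating m_j shows that the four F_q-independent
  l_j are roots of a q-polynomial of q-degree 2. Its coefficients must therefore vanish, which
  yields some s with s^q = s and s^2 + s + 1 = 0. So F_4 \<subseteq> F_q, which is again impossible for odd h.
\<close>

lemma vec4_nth [simp]:
  "vec4 a b c d $ 0 = a" "vec4 a b c d $ 1 = b" "vec4 a b c d $ 2 = c" "vec4 a b c d $ 3 = d"
  by (simp_all add: vec4_def)

lemma UNIV_4_from_0: "(UNIV :: 4 set) = {0, 1, 2, 3}"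
proof -
  have four: "(4 :: 4) = 0" by simp
  show ?thesis using UNIV_4 unfolding four by auto
qed

lemma sum_UNIV_4: "(\<Sum>i\<in>(UNIV :: 4 set). f i) = f 0 + f 1 + f 2 + f 3"
  unfolding UNIV_4_from_0 by (simp add: ac_simps)

lemma vec_eq_4_iff: "(v :: 'a ^ 4) = w \<longleftrightarrow> v$0 = w$0 \<and> v$1 = w$1 \<and> v$2 = w$2 \<and> v$3 = w$3"
proof -
  have "(\<forall>i::4. v $ i = w $ i) \<longleftrightarrow> (\<forall>i\<in>{0, 1, 2, 3}. v $ i = w $ i)"
    unfolding UNIV_4_from_0[symmetric] by simp
  then show ?thesis by (simp add: vec_eq_iff)
qed

lemma all_4_from_0: "(\<forall>i::4. P i) \<longleftrightarrow> P 0 \<and> P 1 \<and> P 2 \<and> P 3"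
  by (metis UNIV_4_from_0 UNIV_I empty_iff insert_iff)

lemma matrix_vector_mult_4_nth:
  "((M :: 'a::semiring_1 ^ 4 ^ 4) *v v) $ i = M$i$0 * v$0 + M$i$1 * v$1 + M$i$2 * v$2 + M$i$3 * v$3"
  by (simp add: matrix_vector_mult_def sum_UNIV_4)

section \<open>Linear independence over a subfield\<close>

lemma lin_indep_overD:
  assumes "lin_indep_over K n v" "\<forall>i<n. c i \<in> K" "(\<Sum>i<n. c i *s v i) = 0" "i < n"
  shows "c i = 0"
  using assms unfolding lin_indep_over_def by blast

lemma lin_indep_over_nonzero:
  fixes v :: "nat \<Rightarrow> 'a::field ^ 'n"
  assumes indep: "lin_indep_over K n v" and "0 \<in> K" "1 \<in> K" "i < n"
  shows "v i \<noteq> 0"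
proof
  assume "v i = 0"
  have "(\<Sum>j<n. (if j = i then 1 else 0) *s v j) = (\<Sum>j<n. if j = i then v j else 0)"
    by (rule sum.cong) simp_all
  also have "\<dots> = 0" using \<open>v i = 0\<close> by simp
  finally have "(if i = i then 1 else 0) = (0::'a)"
    using assms by (intro lin_indep_overD[OF indep]) simp_all
  then show False by simp
qed

lemma lin_indep_over_prefix:
  assumes indep: "lin_indep_over K n v" and "0 \<in> K" and "m \<le> n"
  shows "lin_indep_over K m v"
  unfolding lin_indep_over_def
proof (intro allI impI)
  fix c i assume c: "\<forall>i<m. c i \<in> K" and rel: "(\<Sum>i<m. c i *s v i) = 0" and "i < m"
  define c' where "c' = (\<lambda>i. if i < m then c i else 0)"
  have "(\<Sum>i<n. c' i *s v i) = (\<Sum>i<m. c i *s v i)"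
    using \<open>m \<le> n\<close> by (intro sum.mono_neutral_cong_right) (auto simp: c'_def)
  then have "c' i = 0"
    using \<open>0 \<in> K\<close> \<open>m \<le> n\<close> \<open>i < m\<close> c rel
    by (intro lin_indep_overD[OF indep, of c']) (auto simp: c'_def)
  then show "c i = 0" using \<open>i < m\<close> by (simp add: c'_def)
qed

lemma inj_on_lin_comb:
  assumes "lin_indep_over UNIV n w"
  shows "inj_on (\<lambda>c. \<Sum>i<n. c i *s w i) (PiE {..<n} (\<lambda>_. UNIV))"
proof (rule inj_onI)
  fix c c' assume c: "c \<in> PiE {..<n} (\<lambda>_. UNIV)" and c': "c' \<in> PiE {..<n} (\<lambda>_. UNIV)"
    and eq: "(\<Sum>i<n. c i *s w i) = (\<Sum>i<n. c' i *s w i)"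
  have diff: "(\<Sum>i<n. (c i - c' i) *s w i) = 0"
    using eq by (simp add: vector_sub_rdistrib sum_subtractf)
  have "c i - c' i = 0" if "i < n" for i
    by (rule lin_indep_overD[OF assms _ diff that]) simp
  then show "c = c'"
    using c c' by (intro extensionalityI[of _ "{..<n}"]) (auto simp: PiE_def)
qed

lemma card_lin_combs:
  fixes w :: "nat \<Rightarrow> 'a::{field,finite} ^ 'n"
  assumes "lin_indep_over UNIV n w"
  shows "card ((\<lambda>c. \<Sum>i<n. c i *s w i) ` PiE {..<n} (\<lambda>_. UNIV)) = CARD('a) ^ n"
  using card_image[OF inj_on_lin_comb[OF assms]] by (simp add: card_PiE)

lemma lin_indep_over_UNIV_le_CARD:
  fixes w :: "nat \<Rightarrow> 'a::{field,finite} ^ 'n"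
  assumes "lin_indep_over UNIV n w"
  shows "n \<le> CARD('n)"
proof -
  have "CARD('a) ^ n \<le> CARD('a ^ 'n)"
    unfolding card_lin_combs[OF assms, symmetric] by (rule card_mono) auto
  moreover have "card {0::'a, 1} \<le> CARD('a)" by (rule card_mono) auto
  ultimately show ?thesis by (simp add: power_le_imp_le_exp)
qed

lemma lin_indep_over_UNIV_CARD_spans:
  fixes w :: "nat \<Rightarrow> 'a::{field,finite} ^ 'n"
  assumes "lin_indep_over UNIV CARD('n) w"
  shows "\<exists>c. e = (\<Sum>i<CARD('n). c i *s w i)"
proof -
  let ?combs = "(\<lambda>c. \<Sum>i<CARD('n). c i *s w i) ` PiE {..<CARD('n)} (\<lambda>_. UNIV)"
  have "?combs = UNIV"
    by (rule card_subset_eq) (simp_all add: card_lin_combs[OF assms])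
  then show ?thesis by blast
qed

lemma lin_indep_over_UNIV_CARD_orthogonal:
  fixes w :: "nat \<Rightarrow> 'a::{field,finite} ^ 'n"
  assumes indep: "lin_indep_over UNIV CARD('n) w"
    and orth: "\<forall>j<CARD('n). (\<Sum>i\<in>UNIV. r $ i * w j $ i) = 0"
  shows "r = 0"
proof -
  have "r $ k = 0" for k
  proof -
    obtain c where c: "axis k 1 = (\<Sum>j<CARD('n). c j *s w j)"
      using lin_indep_over_UNIV_CARD_spans[OF indep] by blast
    have "r $ k = (\<Sum>i\<in>UNIV. r $ i * axis k 1 $ i)"
      by (simp add: axis_def if_distrib cong: if_cong)
    also have "\<dots> = (\<Sum>j<CARD('n). c j * (\<Sum>i\<in>UNIV. r $ i * w j $ i))"
      by (simp add: c sum_component sum_distrib_left mult_ac sum.swap[of _ UNIV])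
    also have "\<dots> = 0" using orth by simp
    finally show ?thesis .
  qed
  then show ?thesis by (simp add: vec_eq_iff)
qed

lemma dim_over_le:
  assumes "\<And>n v. \<forall>i<n. v i \<in> S \<Longrightarrow> lin_indep_over K n v \<Longrightarrow> n \<le> m"
  shows "dim_over K S \<le> m"
proof -
  let ?P = "\<lambda>n. \<exists>v. (\<forall>i<n. v i \<in> S) \<and> lin_indep_over K n v"
  have "?P 0" by (simp add: lin_indep_over_def)
  then have "?P (Greatest ?P)" using assms by (intro GreatestI_nat[of ?P 0 m]) auto
  then show ?thesis unfolding dim_over_def using assms by blast
qed

lemma lin_comb_if_extension_dependent:
  fixes v :: "nat \<Rightarrow> 'a::field ^ 'n"
  assumes indep: "lin_indep_over UNIV m v" and dep: "\<not> lin_indep_over UNIV (Suc m) (v(m := u))"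
  shows "\<exists>c. u = (\<Sum>i<m. c i *s v i)"
proof -
  obtain c k where rel: "(\<Sum>i<Suc m. c i *s (v(m := u)) i) = 0" and "k < Suc m" "c k \<noteq> 0"
    using dep unfolding lin_indep_over_def by blast
  have "(\<Sum>i<m. c i *s (v(m := u)) i) = (\<Sum>i<m. c i *s v i)"
    by (rule sum.cong) auto
  then have rel': "(\<Sum>i<m. c i *s v i) + c m *s u = 0"
    using rel by (simp only: sum.lessThan_Suc fun_upd_same)
  have "c m \<noteq> 0"
  proof
    assume "c m = 0"
    then have "c i = 0" if "i < m" for i
      using rel' by (intro lin_indep_overD[OF indep _ _ that]) simp_all
    then show False using \<open>k < Suc m\<close> \<open>c k \<noteq> 0\<close> \<open>c m = 0\<close> less_Suc_eq by blast
  qed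
  have "u = inverse (c m) *s (c m *s u)"
    using \<open>c m \<noteq> 0\<close> by (simp add: vector_smult_assoc)
  also have "c m *s u = (\<Sum>i<m. (- c i) *s v i)"
    using rel' by (simp add: eq_neg_iff_add_eq_0 add.commute sum_negf)
  finally have "u = (\<Sum>i<m. (inverse (c m) * - c i) *s v i)"
    by (simp add: vec.scale_sum_right vector_smult_assoc)
  then show ?thesis by (rule exI[where x = "\<lambda>i. inverse (c m) * - c i"])
qed

lemma dim_over_UNIV_basis:
  fixes H :: "('a::{field,finite} ^ 'n) set"
  assumes "dim_over UNIV H = m"
  obtains v where "\<forall>i<m. v i \<in> H" "lin_indep_over UNIV m v"
    "\<And>u. u \<in> H \<Longrightarrow> \<exists>c. u = (\<Sum>i<m. c i *s v i)"
proof -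
  let ?P = "\<lambda>n. \<exists>v. (\<forall>i<n. v i \<in> H) \<and> lin_indep_over (UNIV :: 'a set) n v"
  have bounded: "n \<le> CARD('n)" if "?P n" for n
    using that lin_indep_over_UNIV_le_CARD by blast
  have "?P 0" by (simp add: lin_indep_over_def)
  then have "?P (Greatest ?P)" using bounded by (intro GreatestI_nat[of ?P 0]) auto
  then obtain v where vH: "\<forall>i<m. v i \<in> H" and indep: "lin_indep_over UNIV m v"
    using assms by (auto simp: dim_over_def)
  have not_Suc: "\<not> ?P (Suc m)"
    using Greatest_le_nat[of ?P "Suc m" "CARD('n)"] bounded assms by (auto simp: dim_over_def)
  have "\<exists>c. u = (\<Sum>i<m. c i *s v i)" if "u \<in> H" for u
  proof (rule lin_comb_if_extension_dependent[OF indep])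
    have "\<forall>i<Suc m. (v(m := u)) i \<in> H"
      using vH \<open>u \<in> H\<close> by (simp add: less_Suc_eq)
    then show "\<not> lin_indep_over UNIV (Suc m) (v(m := u))"
      using not_Suc by blast
  qed
  then show thesis using that vH indep by blast
qed

section \<open>Planes\<close>

lemma singular_2x2_kernel:
  fixes a b c d :: "'a::field"
  assumes "a * d = b * c"
  obtains s t where "s \<noteq> 0 \<or> t \<noteq> 0" "s * a + t * c = 0" "s * b + t * d = 0"
proof -
  consider "a \<noteq> 0 \<or> c \<noteq> 0" | "a = 0" "c = 0" "b \<noteq> 0 \<or> d \<noteq> 0" | "a = 0" "b = 0" "c = 0" "d = 0"
    by blast
  then show thesis
  proof cases
    case 1
    then show thesis using assms by (intro that[of c "- a"]) (auto simp: mult.commute)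
  next
    case 2
    then show thesis by (intro that[of d "- b"]) (auto simp: mult.commute)
  next
    case 3
    then show thesis by (intro that[of 1 0]) simp_all
  qed
qed

lemma coordinate_linear_on_plane:
  fixes h0 h1 :: "'a::field ^ 'n"
  assumes D: "h0$i * h1$j - h0$j * h1$i \<noteq> 0"
  obtains a b where "\<And>\<alpha> \<beta>. (\<alpha> *s h0 + \<beta> *s h1) $ k
      = a * (\<alpha> *s h0 + \<beta> *s h1) $ i + b * (\<alpha> *s h0 + \<beta> *s h1) $ j"
proof
  let ?D = "h0$i * h1$j - h0$j * h1$i"
  let ?A = "h1$j * h0$k - h0$j * h1$k" and ?B = "h0$i * h1$k - h1$i * h0$k"
  fix \<alpha> \<beta>
  let ?w = "\<alpha> *s h0 + \<beta> *s h1"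
  have "?A / ?D * ?w $ i + ?B / ?D * ?w $ j = (?A * ?w $ i + ?B * ?w $ j) / ?D"
    by (simp add: add_divide_distrib)
  also have "?A * ?w $ i + ?B * ?w $ j = ?D * ?w $ k"
    by (simp add: algebra_simps)
  finally show "?w $ k = ?A / ?D * ?w $ i + ?B / ?D * ?w $ j"
    using D by simp
qed

lemma plane_decomposition_if_minor_zero:
  fixes h0 h1 :: "'a::field ^ 'n"
  assumes indep: "\<And>\<alpha> \<beta>. \<alpha> *s h0 + \<beta> *s h1 = 0 \<Longrightarrow> \<alpha> = 0 \<and> \<beta> = 0"
    and minor: "h0$i * h1$j = h0$j * h1$i"
  obtains p v where "v$i = 0" "v$j = 0" "v \<noteq> 0"
    "\<And>\<alpha> \<beta>. \<exists>l m. \<alpha> *s h0 + \<beta> *s h1 = l *s p + m *s v"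
proof -
  obtain s t where st: "s \<noteq> 0 \<or> t \<noteq> 0" "s * h0$i + t * h1$i = 0" "s * h0$j + t * h1$j = 0"
    using singular_2x2_kernel[OF minor] by blast
  define v where "v = s *s h0 + t *s h1"
  have "v \<noteq> 0" using indep st(1) by (auto simp: v_def)
  moreover have "v$i = 0" "v$j = 0" using st by (simp_all add: v_def)
  moreover have "\<exists>l m. \<alpha> *s h0 + \<beta> *s h1 = l *s (if s \<noteq> 0 then h1 else h0) + m *s v" for \<alpha> \<beta>
  proof (cases "s = 0")
    case True
    then have "t \<noteq> 0" using st(1) by simp
    then have "\<alpha> *s h0 + \<beta> *s h1 = \<alpha> *s h0 + (\<beta> / t) *s v"
      using True by (simp add: v_def vec_eq_iff)
    then show ?thesis using True by auto
  next
    case False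
    then have "\<alpha> *s h0 + \<beta> *s h1 = (\<beta> - \<alpha> * t / s) *s h1 + (\<alpha> / s) *s v"
      by (simp add: v_def vec_eq_iff field_simps)
    then show ?thesis using False by auto
  qed
  ultimately show thesis using that by blast
qed

lemma dim_over_UNIV_eq_2_plane:
  fixes H :: "('a::{field,finite} ^ 'n) set"
  assumes "dim_over UNIV H = 2"
  obtains h0 h1 where "\<And>\<alpha> \<beta>. \<alpha> *s h0 + \<beta> *s h1 = 0 \<Longrightarrow> \<alpha> = 0 \<and> \<beta> = 0"
    and "\<And>u. u \<in> H \<Longrightarrow> \<exists>\<alpha> \<beta>. u = \<alpha> *s h0 + \<beta> *s h1"
proof -
  have sum_2: "(\<Sum>i<2. f i) = f 0 + f (1::nat)" for f :: "nat \<Rightarrow> 'a ^ 'n"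
    by (simp add: numeral_2_eq_2)
  obtain v where indep: "lin_indep_over UNIV 2 v" and span: "\<And>u. u \<in> H \<Longrightarrow> \<exists>c. u = (\<Sum>i<2. c i *s v i)"
    using dim_over_UNIV_basis[OF assms] by metis
  show thesis
  proof (rule that[of "v 0" "v 1"])
    fix \<alpha> \<beta> :: 'a
    assume "\<alpha> *s v 0 + \<beta> *s v 1 = 0"
    then have "(\<Sum>i<2. (if i = 0 then \<alpha> else \<beta>) *s v i) = 0" by (simp add: sum_2)
    from lin_indep_overD[OF indep _ this, of 0] lin_indep_overD[OF indep _ this, of 1]
    show "\<alpha> = 0 \<and> \<beta> = 0" by simp
  next
    fix u assume "u \<in> H"
    then show "\<exists>\<alpha> \<beta>. u = \<alpha> *s v 0 + \<beta> *s v 1" using span by (fastforce simp: sum_2)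
  qed
qed

section \<open>Frobenius-closed families of vectors\<close>

lemma lin_indep_over_UNIV_if_relations_power_closed:
  fixes w :: "nat \<Rightarrow> 'a::field ^ 'n"
  assumes "q > 0"
    and closed: "\<And>l. (\<Sum>j<n. l j *s w j) = 0 \<Longrightarrow> (\<Sum>j<n. l j ^ q *s w j) = 0"
    and indep: "lin_indep_over (subfield_Fq q) n w"
  shows "lin_indep_over UNIV n w"
proof (rule ccontr)
  define support where "support l = {j. j < n \<and> l j \<noteq> (0::'a)}" for l
  define nontrivial where "nontrivial l \<longleftrightarrow> (\<Sum>j<n. l j *s w j) = 0 \<and> support l \<noteq> {}" for l
  assume "\<not> lin_indep_over UNIV n w"
  then obtain l0 where "nontrivial l0"
    unfolding lin_indep_over_def nontrivial_def support_def by blast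
  then obtain l where l: "nontrivial l" and minimal: "\<And>l'. nontrivial l' \<Longrightarrow> card (support l) \<le> card (support l')"
    using ex_has_least_nat[of nontrivial l0 "\<lambda>l. card (support l)"] by blast
  then obtain k where k: "k \<in> support l" by (auto simp: nontrivial_def)
  define m where "m j = inverse (l k) * l j" for j
  have "(\<Sum>j<n. m j *s w j) = inverse (l k) *s (\<Sum>j<n. l j *s w j)"
    by (simp add: m_def vec.scale_sum_right vector_smult_assoc)
  then have rel_m: "(\<Sum>j<n. m j *s w j) = 0"
    using l by (simp add: nontrivial_def)
  define v where "v j = m j ^ q - m j" for j
  have rel_v: "(\<Sum>j<n. v j *s w j) = 0"
    using closed[OF rel_m] rel_m by (simp add: v_def vector_sub_rdistrib sum_subtractf)
  txt \<open>Normalising \<open>m k = 1\<close> makes \<open>v k = 0\<close>, so \<open>v\<close> has strictly smaller support than \<open>l\<close>.\<close>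
  have "support v \<subseteq> support l - {k}"
    using k \<open>q > 0\<close> by (auto simp: support_def v_def m_def)
  moreover have "finite (support l)" by (simp add: support_def)
  ultimately have "card (support v) < card (support l)"
    using k by (meson card_Diff1_less card_mono finite_Diff le_less_trans)
  then have "\<not> nontrivial v" using minimal by force
  then have "\<forall>j<n. m j \<in> subfield_Fq q"
    using rel_v by (auto simp: nontrivial_def support_def v_def subfield_Fq_def)
  then have "m k = 0"
    using lin_indep_overD[OF indep _ rel_m] k by (simp add: support_def)
  then show False using k by (simp add: m_def support_def)
qed

lemma lin_indep_over_UNIV_if_frobenius_twisted:
  fixes u :: "nat \<Rightarrow> 'a::field ^ 'n" and M :: "'a ^ 'n ^ 'n"
  assumes char: "prime CHAR('a)" "q = CHAR('a) ^ k"
    and twisted: "\<And>j i. j < n \<Longrightarrow> u j $ i = ((M *v u j) $ i) ^ q"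
    and indep: "lin_indep_over (subfield_Fq q) n u"
  shows "lin_indep_over UNIV n u"
proof -
  have "q > 0" using char by (simp add: prime_gt_0_nat)
  moreover have "(\<Sum>j<n. l j ^ q *s u j) = 0" if rel: "(\<Sum>j<n. l j *s u j) = 0" for l
  proof -
    have "(\<Sum>j<n. l j * (M *v u j) $ i) = 0" for i
      using arg_cong[OF rel, of "\<lambda>v. (M *v v) $ i"] by (simp add: vec.sum vec.scale sum_component)
    moreover have "(\<Sum>j<n. l j * (M *v u j) $ i) ^ q = (\<Sum>j<n. l j ^ q * ((M *v u j) $ i) ^ q)" for i
      by (simp add: freshmans_dream_sum'[OF char] power_mult_distrib)
    moreover have "(\<Sum>j<n. l j ^ q * ((M *v u j) $ i) ^ q) = (\<Sum>j<n. l j ^ q * u j $ i)" for i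
      by (intro sum.cong) (simp_all add: twisted[symmetric])
    ultimately have "(\<Sum>j<n. l j ^ q * u j $ i) = 0" for i
      using \<open>q > 0\<close> by simp
    then show ?thesis
      by (simp add: vec_eq_iff sum_component)
  qed
  ultimately show ?thesis
    using lin_indep_over_UNIV_if_relations_power_closed indep by blast
qed

section \<open>Finite fields of characteristic two\<close>

text \<open>The library version \<open>finite_field_power_card_eq_same\<close> is stated for the sort
  \<open>finite_field\<close> only.\<close>

lemma power_CARD_eq_self: "(x :: 'a::{field,finite}) ^ CARD('a) = x"
proof (cases "x = 0")
  case False
  define G where "G = \<lparr>carrier = UNIV - {0 :: 'a}, monoid.mult = (*), one = (1 :: 'a)\<rparr>"
  interpret group G
  proof (rule groupI)
    fix y assume "y \<in> carrier G"
    then show "\<exists>z\<in>carrier G. z \<otimes>\<^bsub>G\<^esub> y = \<one>\<^bsub>G\<^esub>"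
      by (intro bexI[of _ "inverse y"]) (auto simp: G_def)
  qed (auto simp: G_def)
  have pow: "y [^]\<^bsub>G\<^esub> n = y ^ n" for y :: 'a and n :: nat
    by (induction n) (simp_all add: G_def)
  have "x ^ (CARD('a) - 1) = 1"
    using pow_order_eq_1[of x] False unfolding pow by (simp add: G_def order_def card_Diff_singleton)
  moreover have "CARD('a) = Suc (CARD('a) - 1)"
    using finite_UNIV_card_ge_0[where 'a = 'a] by simp
  ultimately show ?thesis
    by (metis power_Suc mult.right_neutral)
qed (simp add: finite_UNIV_card_ge_0)

lemma CHAR_eq_2_if_CARD_power_of_2:
  assumes "CARD('a::{field,finite}) = 2 ^ k" "0 < k"
  shows "CHAR('a) = 2"
proof -
  have "prime CHAR('a)" by (intro prime_CHAR_semidom finite_imp_CHAR_pos) simp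
  moreover have "CHAR('a) dvd 2 ^ k" using CHAR_dvd_CARD[where 'a='a] assms(1) by simp
  ultimately show ?thesis
    by (metis prime_dvd_power two_is_prime_nat primes_dvd_imp_eq)
qed

lemma char_2_add_eq_0_iff:
  fixes x y :: "'a::ring_1"
  assumes "(2::'a) = 0"
  shows "x + y = 0 \<longleftrightarrow> x = y"
proof -
  have "y + y = 0" by (metis assms mult_2 mult_zero_left)
  then show ?thesis by (metis add_right_cancel)
qed

lemma char_2_add_eq_iff:
  fixes s t r :: "'a::ring_1"
  assumes "(2::'a) = 0"
  shows "s + t = r \<longleftrightarrow> s = r + t"
  using char_2_add_eq_0_iff[OF assms, of "s + t" r]
  by (metis add.assoc add.commute char_2_add_eq_0_iff[OF assms])

lemma char_2_square_add:
  fixes x y :: "'a::comm_ring_1"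
  assumes "(2::'a) = 0"
  shows "(x + y)^2 = x^2 + y^2"
proof -
  have "(x + y)^2 = x^2 + y^2 + 2 * x * y" by (simp add: power2_eq_square algebra_simps)
  then show ?thesis using assms by simp
qed

lemma power_two_power_odd:
  assumes "odd h"
  obtains j where "(x :: 'a::monoid_mult) ^ 2 ^ h = (x ^ 4 ^ j) ^ 2"
proof -
  obtain j where "h = 2 * j + 1" using assms oddE by blast
  then have "(2::nat) ^ h = 4 ^ j * 2" by (simp add: power_add power_mult)
  then show thesis using that[of j] by (simp add: power_mult)
qed

lemma frobenius_odd_moves_cube_root_of_unity:
  fixes s :: "'a::field"
  assumes char_2: "(2::'a) = 0" and "odd h" and root: "s^2 + s + 1 = 0"
  shows "s ^ 2 ^ h \<noteq> s"
proof -
  have s2: "s^2 = s + 1"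
    using root char_2_add_eq_0_iff[OF char_2, of "s^2" "s + 1"] by (simp add: add.assoc)
  have "s^4 = (s + 1)^2" by (simp flip: s2 power_mult)
  also have "\<dots> = s" using char_2 s2 by (simp add: power2_eq_square algebra_simps)
  finally have "s ^ 4 ^ j = s" for j
    by (induction j) (simp_all add: power_Suc2 power_mult del: power_Suc)
  moreover obtain j where "s ^ 2 ^ h = (s ^ 4 ^ j) ^ 2" using power_two_power_odd[OF \<open>odd h\<close>] .
  ultimately show ?thesis using s2 by simp
qed

lemma frobenius_odd_not_shift_on_root_of_x4_x_1:
  fixes b :: "'a::field"
  assumes char_2: "(2::'a) = 0" and "odd h" and root: "b^4 + b + 1 = 0"
  shows "b ^ 2 ^ h \<noteq> b + 1"
proof
  assume shift: "b ^ 2 ^ h = b + 1"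
  note sq = char_2_square_add[OF char_2]
  have b4: "b^4 = b + 1"
    using root char_2_add_eq_0_iff[OF char_2, of "b^4" "b + 1"] by (simp add: add.assoc)
  have "(b + 1)^4 = ((b + 1)^2)^2" by (simp flip: power_mult)
  also have "\<dots> = b"
    using b4 char_2 by (simp add: sq algebra_simps flip: power_mult)
  finally have "b ^ 4 ^ j = (if even j then b else b + 1)" for j
    using b4 by (induction j) (simp_all add: power_Suc2 power_mult del: power_Suc)
  moreover obtain j where "b ^ 2 ^ h = (b ^ 4 ^ j) ^ 2" using power_two_power_odd[OF \<open>odd h\<close>] .
  ultimately have "b^2 = b + 1 \<or> b^2 = b"
    using shift by (auto simp: sq split: if_splits)
  then have "b^4 = b"
  proof
    assume b2: "b^2 = b + 1"
    have "b^4 = (b + 1)^2" by (simp flip: b2 power_mult)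
    then show ?thesis using b2 char_2 by (simp add: sq algebra_simps)
  next
    assume b2: "b^2 = b"
    have "b^4 = (b^2)^2" by (simp flip: power_mult)
    then show ?thesis using b2 by simp
  qed
  then show False using b4 by simp
qed

section \<open>The subspace \<open>U\<close>\<close>

definition U_point :: "nat \<Rightarrow> 'a::field \<Rightarrow> 'a \<Rightarrow> 'a ^ 4" where
  "U_point q x y = vec4 x y (x ^ q + y ^ q^2) (x ^ q^2 + y ^ q + y ^ q^2)"

context
  fixes q h :: nat
  assumes q_eq: "q = 2 ^ h" and odd_h: "odd h" and card_eq: "CARD('a::{field,finite}) = q ^ 4"
begin

lemma q_gt_0: "q > 0"
  using q_eq by simp

lemma CHAR_eq_2: "CHAR('a) = 2"
  using CHAR_eq_2_if_CARD_power_of_2[of "h * 4"] card_eq q_eq odd_h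
  by (simp add: power_mult odd_pos)

lemma q_eq_CHAR_power: "q = CHAR('a) ^ h"
  by (simp add: CHAR_eq_2 q_eq)

lemma two_eq_0 [simp]: "(2::'a) = 0"
  using of_nat_CHAR[where 'a = 'a] by (simp add: CHAR_eq_2)

lemma frobenius_add [simp]: "(x + y :: 'a) ^ q = x ^ q + y ^ q"
  by (rule freshmans_dream'[OF _ q_eq_CHAR_power]) (simp add: CHAR_eq_2)

lemma frobenius_0 [simp]: "(0 :: 'a) ^ q = 0"
  using q_gt_0 by simp

lemma frobenius_power [simp]:
  "(x ^ q) ^ q = x ^ q^2" "(x ^ q^2) ^ q = x ^ q^3" "(x ^ q^3) ^ q = (x :: 'a)"
  using power_CARD_eq_self[of x]
  by (simp_all add: card_eq flip: power_mult, simp_all add: power2_eq_square power3_eq_cube power4_eq_xxxx mult.assoc)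

lemma sum_Fq_mult_power:
  fixes x :: "'b \<Rightarrow> 'a"
  assumes "\<forall>j\<in>S. c j \<in> subfield_Fq q"
  shows "(\<Sum>j\<in>S. c j * x j) ^ q^n = (\<Sum>j\<in>S. c j * x j ^ q^n)"
proof -
  have "c j ^ q^n = c j" if "j \<in> S" for j
    using assms that by (induction n) (simp_all add: subfield_Fq_def power_Suc2 power_mult del: power_Suc)
  moreover have "(\<Sum>j\<in>S. c j * x j) ^ q^n = (\<Sum>j\<in>S. (c j * x j) ^ q^n)"
    by (rule freshmans_dream_sum'[where n = "h * n"]) (simp_all add: CHAR_eq_2 q_eq power_mult)
  ultimately show ?thesis
    by (simp add: power_mult_distrib)
qed

lemma U_point_sum:
  fixes x y :: "'b \<Rightarrow> 'a"
  assumes "\<forall>j\<in>S. c j \<in> subfield_Fq q"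
  shows "(\<Sum>j\<in>S. c j *s U_point q (x j) (y j)) = U_point q (\<Sum>j\<in>S. c j * x j) (\<Sum>j\<in>S. c j * y j)"
  using sum_Fq_mult_power[OF assms, of _ 1] sum_Fq_mult_power[OF assms, of _ 2]
  by (simp add: U_point_def vec_eq_4_iff sum_component sum.distrib distrib_left)

lemma U_point_0 [simp]: "U_point q 0 0 = (0 :: 'a ^ 4)"
  using q_gt_0 by (simp add: U_point_def vec_eq_4_iff power_0_left)

lemma U_point_coords_lin_indep:
  fixes x y :: "nat \<Rightarrow> 'a"
  assumes indep: "lin_indep_over (subfield_Fq q) n (\<lambda>j. U_point q (x j) (y j))"
    and c: "\<forall>j<n. c j \<in> subfield_Fq q" and "(\<Sum>j<n. c j * x j) = 0" "(\<Sum>j<n. c j * y j) = 0"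
    and "i < n"
  shows "c i = 0"
proof (rule lin_indep_overD[OF indep c _ \<open>i < n\<close>])
  show "(\<Sum>j<n. c j *s U_point q (x j) (y j)) = 0"
    using U_point_sum[of "{..<n}" c] c assms(3,4) by simp
qed

lemma moore_vectors_lin_indep:
  fixes lam :: "nat \<Rightarrow> 'a"
  assumes indep: "\<And>c. \<forall>j<4. c j \<in> subfield_Fq q \<Longrightarrow> (\<Sum>j<4. c j * lam j) = 0 \<Longrightarrow> \<forall>j<4. c j = 0"
  shows "lin_indep_over UNIV 4 (\<lambda>j. vec4 (lam j) (lam j ^ q) (lam j ^ q^2) (lam j ^ q^3))"
    (is "lin_indep_over UNIV 4 ?u")
proof (rule lin_indep_over_UNIV_if_frobenius_twisted[OF _ q_eq_CHAR_power])
  show "prime CHAR('a)" by (simp add: CHAR_eq_2)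
  let ?shift = "vec4 (vec4 0 0 0 1) (vec4 1 0 0 0) (vec4 0 1 0 0) (vec4 0 0 1 0) :: 'a ^ 4 ^ 4"
  have "\<forall>i. ?u j $ i = ((?shift *v ?u j) $ i) ^ q" for j
    unfolding all_4_from_0 by (simp add: matrix_vector_mult_4_nth)
  then show "?u j $ i = ((?shift *v ?u j) $ i) ^ q" for j i
    by blast
  show "lin_indep_over (subfield_Fq q) 4 ?u"
    unfolding lin_indep_over_def
  proof (rule allI, intro impI)
    fix c assume c: "\<forall>j<4. c j \<in> subfield_Fq q" and rel: "(\<Sum>j<4. c j *s ?u j) = 0"
    have "(\<Sum>j<4. c j * lam j) = (\<Sum>j<4. c j *s ?u j) $ 0"
      by (simp add: sum_component)
    then have "(\<Sum>j<4. c j * lam j) = 0"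
      using rel by simp
    then show "\<forall>j<4. c j = 0" using indep c by blast
  qed
qed

lemma q_polynomial_with_four_independent_roots:
  fixes lam :: "nat \<Rightarrow> 'a"
  assumes indep: "\<And>c. \<forall>j<4. c j \<in> subfield_Fq q \<Longrightarrow> (\<Sum>j<4. c j * lam j) = 0 \<Longrightarrow> \<forall>j<4. c j = 0"
    and roots: "\<And>j. j < 4 \<Longrightarrow> g0 * lam j + g1 * lam j ^ q + g2 * lam j ^ q^2 + g3 * lam j ^ q^3 = 0"
  shows "g0 = 0 \<and> g1 = 0 \<and> g2 = 0 \<and> g3 = 0"
proof -
  have "lin_indep_over UNIV CARD(4) (\<lambda>j. vec4 (lam j) (lam j ^ q) (lam j ^ q^2) (lam j ^ q^3))"
    using moore_vectors_lin_indep[of lam, OF indep] by simp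
  then have "vec4 g0 g1 g2 g3 = 0"
    by (rule lin_indep_over_UNIV_CARD_orthogonal) (simp add: sum_UNIV_4 roots)
  then show ?thesis by (simp add: vec_eq_4_iff)
qed

lemma frobenius_mobius_fixed_point:
  fixes s :: 'a
  assumes "s ^ q * (s + 1) = 1"
  shows "s ^ q = s" and "s^2 + s + 1 = 0"
proof -
  have conj: "u ^ q * (t ^ q + 1) = 1" if "u * (t + 1) = 1" for u t :: 'a
    using arg_cong[OF that, of "\<lambda>z. z ^ q"] by (simp add: power_mult_distrib)
  have E0: "s ^ q * (s + 1) = 1" by fact
  have E1: "s ^ q^2 * (s ^ q + 1) = 1" using conj[OF E0] by simp
  have E2: "s ^ q^3 * (s ^ q^2 + 1) = 1" using conj[OF E1] by simp
  have E3: "s * (s ^ q^3 + 1) = 1" using conj[OF E2] by simp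
  txt \<open>Each equation says \<open>u = 1 / (t + 1)\<close>; this Moebius map has order 3 in characteristic 2.\<close>
  have order_3: "u * (v * t) = 1" if "u * (v + 1) = 1" "v * (t + 1) = 1" for u v t :: 'a
  proof -
    have "u * (v * t) = u * (v * (t + 1) + v)" by (simp add: algebra_simps)
    also have "\<dots> = u * (v + 1)" using that(2) by (simp add: add.commute)
    finally show ?thesis using that(1) by simp
  qed
  have "s ^ q^2 * (s ^ q * s) = 1" by (rule order_3[OF E1 E0])
  moreover have "s ^ q^3 * (s ^ q^2 * s ^ q) = 1" by (rule order_3[OF E2 E1])
  ultimately have "s ^ q^3 = s"
    by (metis mult.assoc mult.commute mult_cancel_left one_neq_zero mult_zero_left)
  then have E: "s * (s + 1) = 1" using E3 by simp
  then show "s ^ q = s" using E0 by (metis mult_cancel_right mult_zero_right zero_neq_one)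
  show "s^2 + s + 1 = 0"
    using E by (simp add: power2_eq_square algebra_simps char_2_add_eq_0_iff[OF two_eq_0, of "s * s + s" 1])
qed

lemma degenerate_plane_ratio_equation:
  fixes p0 p1 v2 v3 :: 'a
  assumes "p0 \<noteq> 0" "v2 \<noteq> 0"
    and g1: "v3 * p0 ^ q + v2 * p1 ^ q = 0"
    and g2: "v3 * p1 ^ q^2 + v2 * (p0 ^ q^2 + p1 ^ q^2) = 0"
  shows "((p1 / p0) ^ q) ^ q * ((p1 / p0) ^ q + 1) = 1"
proof -
  define s where "s = (p1 / p0) ^ q"
  have "v3 * p0 ^ q = v2 * p1 ^ q"
    using g1 char_2_add_eq_0_iff[OF two_eq_0] by blast
  then have v3: "v3 = v2 * s"
    using \<open>p0 \<noteq> 0\<close> q_gt_0 by (simp add: s_def power_divide field_simps)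
  have "v3 * p1 ^ q^2 = v2 * (p0 ^ q^2 + p1 ^ q^2)"
    using g2 char_2_add_eq_0_iff[OF two_eq_0] by blast
  then have "s * p1 ^ q^2 = p0 ^ q^2 + p1 ^ q^2"
    using \<open>v2 \<noteq> 0\<close> by (simp add: v3 mult.assoc)
  moreover have "p1 ^ q^2 = s ^ q * p0 ^ q^2"
    using \<open>p0 \<noteq> 0\<close> by (simp add: s_def power_divide)
  ultimately have "(s * s ^ q) * p0 ^ q^2 = (1 + s ^ q) * p0 ^ q^2"
    by (simp add: algebra_simps)
  then have "s * s ^ q = 1 + s ^ q"
    using \<open>p0 \<noteq> 0\<close> by simp
  then show "s ^ q * (s + 1) = 1"
    by (simp add: algebra_simps char_2_add_eq_0_iff[OF two_eq_0, of "s * s ^ q"] flip: add.assoc)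
qed

lemma degenerate_plane_coefficients_impossible:
  fixes p0 p1 v2 v3 :: 'a
  assumes p: "p0 \<noteq> 0 \<or> p1 \<noteq> 0" and v: "v2 \<noteq> 0 \<or> v3 \<noteq> 0"
    and g1: "v3 * p0 ^ q + v2 * p1 ^ q = 0"
    and g2: "v3 * p1 ^ q^2 + v2 * (p0 ^ q^2 + p1 ^ q^2) = 0"
  shows False
proof -
  have "v2 \<noteq> 0"
  proof
    assume "v2 = 0"
    then have "p0 = 0" "p1 = 0" using v g1 g2 q_gt_0 by simp_all
    then show False using p by simp
  qed
  have "p0 \<noteq> 0"
  proof
    assume "p0 = 0"
    then have "p1 = 0" using g1 \<open>v2 \<noteq> 0\<close> by simp
    then show False using p \<open>p0 = 0\<close> by simp
  qed
  define s where "s = (p1 / p0) ^ q"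
  have "s ^ q * (s + 1) = 1"
    unfolding s_def using degenerate_plane_ratio_equation g1 g2 \<open>v2 \<noteq> 0\<close> \<open>p0 \<noteq> 0\<close> by blast
  then have "s ^ q = s" "s^2 + s + 1 = 0"
    by (rule frobenius_mobius_fixed_point)+
  then show False
    using frobenius_odd_moves_cube_root_of_unity[OF two_eq_0 odd_h] q_eq by simp
qed

lemma U_point_degenerate_plane_q_polynomial:
  fixes p v :: "'a ^ 4"
  assumes v: "v $ 0 = 0" "v $ 1 = 0" and on_plane: "U_point q x y = l *s p + m *s v"
  shows "(v$3 * p$2 + v$2 * p$3) * l + (v$3 * p$0 ^ q + v$2 * p$1 ^ q) * l ^ q
      + (v$3 * p$1 ^ q^2 + v$2 * (p$0 ^ q^2 + p$1 ^ q^2)) * l ^ q^2 = 0"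
proof -
  have coords: "U_point q x y $ i = l * p $ i + m * v $ i" for i
    using on_plane by simp
  have x: "x = l * p $ 0" and y: "y = l * p $ 1"
    using coords[of 0] coords[of 1] v by (simp_all add: U_point_def)
  txt \<open>Eliminate \<open>m\<close> between the last two coordinates.\<close>
  have "x ^ q + y ^ q^2 = l * p$2 + m * v$2" "x ^ q^2 + y ^ q + y ^ q^2 = l * p$3 + m * v$3"
    using coords[of 2] coords[of 3] by (simp_all add: U_point_def)
  then have "v$3 * (x ^ q + y ^ q^2) + v$2 * (x ^ q^2 + y ^ q + y ^ q^2) = (v$3 * p$2 + v$2 * p$3) * l"
    by (simp add: algebra_simps)
  moreover have "v$3 * (x ^ q + y ^ q^2) + v$2 * (x ^ q^2 + y ^ q + y ^ q^2)
      = (v$3 * p$0 ^ q + v$2 * p$1 ^ q) * l ^ q + (v$3 * p$1 ^ q^2 + v$2 * (p$0 ^ q^2 + p$1 ^ q^2)) * l ^ q^2"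
    by (simp add: x y power_mult_distrib algebra_simps)
  ultimately have "(v$3 * p$2 + v$2 * p$3) * l
      = (v$3 * p$0 ^ q + v$2 * p$1 ^ q) * l ^ q + (v$3 * p$1 ^ q^2 + v$2 * (p$0 ^ q^2 + p$1 ^ q^2)) * l ^ q^2"
    by simp
  then show ?thesis
    using char_2_add_eq_0_iff[OF two_eq_0, of "(v$3 * p$2 + v$2 * p$3) * l"] by (simp add: add.assoc)
qed

lemma U_point_degenerate_plane_impossible:
  fixes p v :: "'a ^ 4" and x y lam mu :: "nat \<Rightarrow> 'a"
  assumes v: "v $ 0 = 0" "v $ 1 = 0" "v \<noteq> 0"
    and on_plane: "\<And>j. j < 4 \<Longrightarrow> U_point q (x j) (y j) = lam j *s p + mu j *s v"
    and indep: "lin_indep_over (subfield_Fq q) 4 (\<lambda>j. U_point q (x j) (y j))"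
  shows False
proof -
  have x: "x j = lam j * p $ 0" and y: "y j = lam j * p $ 1" if "j < 4" for j
    using arg_cong[OF on_plane[OF that], of "\<lambda>w. w $ 0"] arg_cong[OF on_plane[OF that], of "\<lambda>w. w $ 1"] v
    by (simp_all add: U_point_def)
  show False
  proof (cases "p $ 0 = 0 \<and> p $ 1 = 0")
    case True
    then have "U_point q (x 0) (y 0) = 0"
      by (simp add: x y)
    moreover have "U_point q (x 0) (y 0) \<noteq> 0"
      using lin_indep_over_nonzero[OF indep] q_gt_0 by (simp add: subfield_Fq_def)
    ultimately show False by simp
  next
    case False
    have lam_indep: "\<forall>j<4. c j = 0"
      if c: "\<forall>j<4. c j \<in> subfield_Fq q" and rel: "(\<Sum>j<4. c j * lam j) = 0" for c
    proof -
      have "(\<Sum>j<4. c j * x j) = (\<Sum>j<4. c j * lam j) * p $ 0"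
        "(\<Sum>j<4. c j * y j) = (\<Sum>j<4. c j * lam j) * p $ 1"
        by (simp_all add: x y sum_distrib_right mult.assoc)
      then have "c i = 0" if "i < 4" for i
        using rel by (intro U_point_coords_lin_indep[OF indep c _ _ that]) simp_all
      then show ?thesis by blast
    qed
    let ?g0 = "v$3 * p$2 + v$2 * p$3" and ?g1 = "v$3 * p$0 ^ q + v$2 * p$1 ^ q"
      and ?g2 = "v$3 * p$1 ^ q^2 + v$2 * (p$0 ^ q^2 + p$1 ^ q^2)"
    have "?g0 * lam j + ?g1 * lam j ^ q + ?g2 * lam j ^ q^2 + 0 * lam j ^ q^3 = 0" if "j < 4" for j
      using U_point_degenerate_plane_q_polynomial[OF v(1,2) on_plane[OF that]] by simp
    then have "?g1 = 0" "?g2 = 0"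
      using q_polynomial_with_four_independent_roots[OF lam_indep] by blast+
    moreover have "v$2 \<noteq> 0 \<or> v$3 \<noteq> 0" using v by (auto simp: vec_eq_4_iff)
    ultimately show False
      using degenerate_plane_coefficients_impossible[of "p$0" "p$1" "v$2" "v$3"] False by blast
  qed
qed

lemma graph_conjugates:
  fixes x y a b c d :: 'a
  assumes g2: "x ^ q + y ^ q^2 = a * x + b * y"
    and g3: "x ^ q^2 + y ^ q + y ^ q^2 = c * x + d * y"
  shows "x ^ q^2 + y ^ q^3 = a ^ q * x ^ q + b ^ q * y ^ q"
    and "x ^ q^3 + y = a ^ q^2 * x ^ q^2 + b ^ q^2 * y ^ q^2"
    and "x + y ^ q = a ^ q^3 * x ^ q^3 + b ^ q^3 * y ^ q^3"
    and "x ^ q^3 + y ^ q^2 + y ^ q^3 = c ^ q * x ^ q + d ^ q * y ^ q"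
    and "x + y ^ q^3 + y = c ^ q^2 * x ^ q^2 + d ^ q^2 * y ^ q^2"
    and "x ^ q + y + y ^ q = c ^ q^3 * x ^ q^3 + d ^ q^3 * y ^ q^3"
proof -
  have conj: "s ^ q = t ^ q" if "s = t" for s t :: 'a
    using that by simp
  show e21: "x ^ q^2 + y ^ q^3 = a ^ q * x ^ q + b ^ q * y ^ q"
    using conj[OF g2] by (simp add: power_mult_distrib)
  show e22: "x ^ q^3 + y = a ^ q^2 * x ^ q^2 + b ^ q^2 * y ^ q^2"
    using conj[OF e21] by (simp add: power_mult_distrib)
  show "x + y ^ q = a ^ q^3 * x ^ q^3 + b ^ q^3 * y ^ q^3"
    using conj[OF e22] by (simp add: power_mult_distrib)
  show e31: "x ^ q^3 + y ^ q^2 + y ^ q^3 = c ^ q * x ^ q + d ^ q * y ^ q"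
    using conj[OF g3] by (simp add: power_mult_distrib)
  show e32: "x + y ^ q^3 + y = c ^ q^2 * x ^ q^2 + d ^ q^2 * y ^ q^2"
    using conj[OF e31] by (simp add: power_mult_distrib)
  show "x ^ q + y + y ^ q = c ^ q^3 * x ^ q^3 + d ^ q^3 * y ^ q^3"
    using conj[OF e32] by (simp add: power_mult_distrib)
qed

lemma graph_descent:
  fixes x0 x1 x2 x3 y0 y1 y2 y3 :: 'a
  assumes "x2 + y3 = a ^ q * x1 + b ^ q * y1" and "x0 + y1 = a ^ q^3 * x3 + b ^ q^3 * y3"
    and "x3 + y2 + y3 = c ^ q * x1 + d ^ q * y1" and "x1 + y0 + y1 = c ^ q^3 * x3 + d ^ q^3 * y3"
  shows "x0 = y1 + a ^ q^3 * x3 + b ^ q^3 * y3" and "y0 = x1 + y1 + c ^ q^3 * x3 + d ^ q^3 * y3"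
    and "x2 = a ^ q * x1 + b ^ q * y1 + y3" and "y2 = c ^ q * x1 + d ^ q * y1 + x3 + y3"
proof -
  note solve = char_2_add_eq_iff[OF two_eq_0, THEN iffD1]
  show "x0 = y1 + a ^ q^3 * x3 + b ^ q^3 * y3"
    using solve[OF assms(2)] by (simp add: ac_simps)
  show "x2 = a ^ q * x1 + b ^ q * y1 + y3" using solve[OF assms(1)] .
  have "y0 + (x1 + y1) = c ^ q^3 * x3 + d ^ q^3 * y3" using assms(4) by (simp add: ac_simps)
  then have "y0 = c ^ q^3 * x3 + d ^ q^3 * y3 + (x1 + y1)" by (rule solve)
  then show "y0 = x1 + y1 + c ^ q^3 * x3 + d ^ q^3 * y3" by (simp add: ac_simps)
  have "y2 + (x3 + y3) = c ^ q * x1 + d ^ q * y1" using assms(3) by (simp add: ac_simps)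
  then have "y2 = c ^ q * x1 + d ^ q * y1 + (x3 + y3)" by (rule solve)
  then show "y2 = c ^ q * x1 + d ^ q * y1 + x3 + y3" by (simp add: add.assoc)
qed

lemma graph_rows:
  fixes x0 x1 x2 x3 y0 y1 y2 y3 :: 'a
  assumes e10: "x1 + y2 = a * x0 + b * y0" and e11: "x2 + y3 = a ^ q * x1 + b ^ q * y1"
    and e12: "x3 + y0 = a ^ q^2 * x2 + b ^ q^2 * y2" and e13: "x0 + y1 = a ^ q^3 * x3 + b ^ q^3 * y3"
    and e20: "x2 + y1 + y2 = c * x0 + d * y0" and e21: "x3 + y2 + y3 = c ^ q * x1 + d ^ q * y1"
    and e22: "x0 + y3 + y0 = c ^ q^2 * x2 + d ^ q^2 * y2" and e23: "x1 + y0 + y1 = c ^ q^3 * x3 + d ^ q^3 * y3"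
  shows "(1 + b + c ^ q) * x1 + (a + b + d ^ q) * y1 + (a * a ^ q^3 + b * c ^ q^3 + 1) * x3
      + (a * b ^ q^3 + b * d ^ q^3 + 1) * y3 = 0"
    and "(d + a ^ q + c ^ q) * x1 + (1 + c + d + b ^ q + d ^ q) * y1 + (c * a ^ q^3 + d * c ^ q^3 + 1) * x3
      + (c * b ^ q^3 + d * d ^ q^3) * y3 = 0"
    and "(a ^ q^2 * a ^ q + b ^ q^2 * c ^ q + 1) * x1 + (a ^ q^2 * b ^ q + b ^ q^2 * d ^ q + 1) * y1
      + (1 + c ^ q^3 + b ^ q^2) * x3 + (d ^ q^3 + a ^ q^2 + b ^ q^2) * y3 = 0"
    and "(c ^ q^2 * a ^ q + d ^ q^2 * c ^ q + 1) * x1 + (c ^ q^2 * b ^ q + d ^ q^2 * d ^ q) * y1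
      + (a ^ q^3 + c ^ q^3 + d ^ q^2) * x3 + (1 + b ^ q^3 + d ^ q^3 + c ^ q^2 + d ^ q^2) * y3 = 0"
  using e10 e12 e20 e22 unfolding graph_descent[OF e11 e13 e21 e23]
  by (simp_all add: char_2_add_eq_iff algebra_simps)

lemma graph_coefficient_matrix_scalar:
  fixes a b c d :: 'a
  assumes Y: "a * a ^ q^3 + b * c ^ q^3 = 1" "a * b ^ q^3 + b * d ^ q^3 = 1"
      "c * a ^ q^3 + d * c ^ q^3 = 1" "c * b ^ q^3 + d * d ^ q^3 = 0"
    and Z: "a ^ q^2 * a ^ q + b ^ q^2 * c ^ q = 1" "a ^ q^2 * b ^ q + b ^ q^2 * d ^ q = 1"
      "c ^ q^2 * a ^ q + d ^ q^2 * c ^ q = 1" "c ^ q^2 * b ^ q + d ^ q^2 * d ^ q = 0"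
  shows "c = b" and "d = a + b"
proof -
  txt \<open>Write \<open>N = (a b; c d)\<close>, \<open>N\<^sub>i\<close> for its \<open>i\<close>-th Frobenius conjugate and \<open>J = (1 1; 1 0)\<close>.
    Then \<open>Y\<close> says \<open>N N\<^sub>3 = J\<close> and \<open>Z\<close> says \<open>N\<^sub>2 N\<^sub>1 = J\<close>.\<close>
  have conj: "s ^ q = t ^ q" if "s = t" for s t :: 'a
    using that by simp
  have N1N: "a ^ q * a + b ^ q * c = 1" "a ^ q * b + b ^ q * d = 1"
      "c ^ q * a + d ^ q * c = 1" "c ^ q * b + d ^ q * d = 0"
    using conj[OF Y(1)] conj[OF Y(2)] conj[OF Y(3)] conj[OF Y(4)]
    by (simp_all add: power_mult_distrib)
  have col1: "(e * a ^ q + f * c ^ q) * a + (e * b ^ q + f * d ^ q) * c = e + f" for e f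
  proof -
    have "(e * a ^ q + f * c ^ q) * a + (e * b ^ q + f * d ^ q) * c
        = e * (a ^ q * a + b ^ q * c) + f * (c ^ q * a + d ^ q * c)"
      by (simp add: algebra_simps)
    then show ?thesis using N1N by simp
  qed
  have col2: "(e * a ^ q + f * c ^ q) * b + (e * b ^ q + f * d ^ q) * d = e" for e f
  proof -
    have "(e * a ^ q + f * c ^ q) * b + (e * b ^ q + f * d ^ q) * d
        = e * (a ^ q * b + b ^ q * d) + f * (c ^ q * b + d ^ q * d)"
      by (simp add: algebra_simps)
    then show ?thesis using N1N by simp
  qed
  txt \<open>Hence \<open>N\<^sub>2 J = N\<^sub>2 N\<^sub>1 N = J N\<close>.\<close>
  have N2J_eq_JN: "a ^ q^2 + b ^ q^2 = a + c" "a ^ q^2 = b + d" "c ^ q^2 + d ^ q^2 = a" "c ^ q^2 = b"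
    using col1[of "a ^ q^2" "b ^ q^2"] col2[of "a ^ q^2" "b ^ q^2"]
      col1[of "c ^ q^2" "d ^ q^2"] col2[of "c ^ q^2" "d ^ q^2"]
    unfolding Z by simp_all
  txt \<open>Conjugating twice gives \<open>N J = J N\<^sub>2\<close>.\<close>
  have "c + d = a ^ q^2" "c = b ^ q^2"
    using conj[OF conj[OF N2J_eq_JN(3)]] conj[OF conj[OF N2J_eq_JN(4)]] by simp_all
  then show "c = b" using N2J_eq_JN(2) by simp
  then show "d = a + b" using N2J_eq_JN(1,2) \<open>c = b ^ q^2\<close> by (simp add: char_2_add_eq_iff)
qed

lemma graph_scalar_coefficients_impossible:
  fixes a b :: 'a
  assumes b1: "b ^ q = b + 1" and a1: "a ^ q = a + 1"
    and "a ^ q * a + b ^ q * b = 1" and "a ^ q * b + b ^ q * (a + b) = 1"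
  shows False
proof -
  have "b^2 + a = 1"
    using assms(4) unfolding a1 b1 by (simp add: power2_eq_square algebra_simps)
  then have a: "a = b^2 + 1"
    by (simp add: char_2_add_eq_iff[OF two_eq_0, of a "b^2", symmetric] add.commute)
  have "(a + 1) * a + (b + 1) * b = 1"
    using assms(3) by (simp only: a1 b1)
  then have "(b^2 + 1 + 1) * (b^2 + 1) + (b + 1) * b = 1"
    by (simp only: a)
  then have "b^4 + b + 1 = 0"
    by (simp add: power4_eq_xxxx power2_eq_square algebra_simps char_2_add_eq_0_iff)
  moreover have "b ^ 2 ^ h = b + 1" using b1 q_eq by simp
  ultimately show False
    using frobenius_odd_not_shift_on_root_of_x4_x_1[OF two_eq_0 odd_h] by blast
qed

lemma graph_frobenius_vectors_lin_indep:
  fixes a b c d :: 'a and x y :: "nat \<Rightarrow> 'a"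
  assumes g2: "\<And>j. j < 4 \<Longrightarrow> x j ^ q + y j ^ q^2 = a * x j + b * y j"
    and g3: "\<And>j. j < 4 \<Longrightarrow> x j ^ q^2 + y j ^ q + y j ^ q^2 = c * x j + d * y j"
    and indep: "lin_indep_over (subfield_Fq q) 4 (\<lambda>j. U_point q (x j) (y j))"
  shows "lin_indep_over UNIV 4 (\<lambda>j. vec4 (x j ^ q) (y j ^ q) (x j ^ q^3) (y j ^ q^3))"
    (is "lin_indep_over UNIV 4 ?u")
proof (rule lin_indep_over_UNIV_if_frobenius_twisted[OF _ q_eq_CHAR_power])
  show "prime CHAR('a)" by (simp add: CHAR_eq_2)
  let ?M = "vec4 (vec4 0 1 (a ^ q^3) (b ^ q^3)) (vec4 1 1 (c ^ q^3) (d ^ q^3))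
    (vec4 (a ^ q) (b ^ q) 0 1) (vec4 (c ^ q) (d ^ q) 1 1)"
  have "?M *v ?u j = vec4 (x j) (y j) (x j ^ q^2) (y j ^ q^2)" if "j < 4" for j
  proof -
    note conj = graph_conjugates[OF g2[OF that] g3[OF that]]
    note descent = graph_descent[OF conj(1) conj(3) conj(4) conj(6)]
    show ?thesis
      by (simp add: vec_eq_4_iff matrix_vector_mult_4_nth descent(1,2,3,4)[symmetric])
  qed
  then have "\<forall>i. ?u j $ i = ((?M *v ?u j) $ i) ^ q" if "j < 4" for j
    using that unfolding all_4_from_0 by simp
  then show "?u j $ i = ((?M *v ?u j) $ i) ^ q" if "j < 4" for j i
    using that by blast
  show "lin_indep_over (subfield_Fq q) 4 ?u"
    unfolding lin_indep_over_def
  proof (rule allI, intro impI)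
    fix l assume l: "\<forall>j<4. l j \<in> subfield_Fq q" and rel: "(\<Sum>j<4. l j *s ?u j) = 0"
    have "(\<Sum>j<4. l j * x j) ^ q = (\<Sum>j<4. l j *s ?u j) $ 0"
      "(\<Sum>j<4. l j * y j) ^ q = (\<Sum>j<4. l j *s ?u j) $ 1"
      using sum_Fq_mult_power[of "{..<4}" l _ 1] l by (simp_all add: sum_component)
    then have "(\<Sum>j<4. l j * x j) = 0" "(\<Sum>j<4. l j * y j) = 0"
      using rel q_gt_0 by simp_all
    then show "\<forall>j<4. l j = 0"
      using U_point_coords_lin_indep[OF indep l] by blast
  qed
qed

lemma graph_coefficient_equations:
  fixes a b c d :: 'a and x y :: "nat \<Rightarrow> 'a"
  assumes g2: "\<And>j. j < 4 \<Longrightarrow> x j ^ q + y j ^ q^2 = a * x j + b * y j"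
    and g3: "\<And>j. j < 4 \<Longrightarrow> x j ^ q^2 + y j ^ q + y j ^ q^2 = c * x j + d * y j"
    and indep: "lin_indep_over (subfield_Fq q) 4 (\<lambda>j. U_point q (x j) (y j))"
  shows "1 + b + c ^ q = 0" "a + b + d ^ q = 0"
    and "a * a ^ q^3 + b * c ^ q^3 = 1" "a * b ^ q^3 + b * d ^ q^3 = 1"
      "c * a ^ q^3 + d * c ^ q^3 = 1" "c * b ^ q^3 + d * d ^ q^3 = 0"
    and "a ^ q^2 * a ^ q + b ^ q^2 * c ^ q = 1" "a ^ q^2 * b ^ q + b ^ q^2 * d ^ q = 1"
      "c ^ q^2 * a ^ q + d ^ q^2 * c ^ q = 1" "c ^ q^2 * b ^ q + d ^ q^2 * d ^ q = 0"
proof -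
  have vanish: "A = 0 \<and> B = 0 \<and> C = 0 \<and> D = 0"
    if "\<And>j. j < 4 \<Longrightarrow> A * x j ^ q + B * y j ^ q + C * x j ^ q^3 + D * y j ^ q^3 = 0" for A B C D
  proof -
    have "lin_indep_over UNIV CARD(4) (\<lambda>j. vec4 (x j ^ q) (y j ^ q) (x j ^ q^3) (y j ^ q^3))"
      using graph_frobenius_vectors_lin_indep[OF g2 g3 indep] by simp
    then have "vec4 A B C D = 0"
      by (rule lin_indep_over_UNIV_CARD_orthogonal) (simp add: sum_UNIV_4 that)
    then show ?thesis by (simp add: vec_eq_4_iff)
  qed
  note rows = graph_rows[OF g2 graph_conjugates(1-3)[OF g2 g3] g3 graph_conjugates(4-6)[OF g2 g3]]
  note one_sum = char_2_add_eq_0_iff[OF two_eq_0, THEN iffD1]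
  show "1 + b + c ^ q = 0" "a + b + d ^ q = 0"
    using vanish[OF rows(1)] by blast+
  show "a * a ^ q^3 + b * c ^ q^3 = 1" "a * b ^ q^3 + b * d ^ q^3 = 1"
      "c * a ^ q^3 + d * c ^ q^3 = 1" "c * b ^ q^3 + d * d ^ q^3 = 0"
    using vanish[OF rows(1)] vanish[OF rows(2)] by (blast intro: one_sum)+
  show "a ^ q^2 * a ^ q + b ^ q^2 * c ^ q = 1" "a ^ q^2 * b ^ q + b ^ q^2 * d ^ q = 1"
      "c ^ q^2 * a ^ q + d ^ q^2 * c ^ q = 1" "c ^ q^2 * b ^ q + d ^ q^2 * d ^ q = 0"
    using vanish[OF rows(3)] vanish[OF rows(4)] by (blast intro: one_sum)+
qed

lemma U_point_graph_impossible:
  fixes a b c d :: 'a and x y :: "nat \<Rightarrow> 'a"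
  assumes g2: "\<And>j. j < 4 \<Longrightarrow> x j ^ q + y j ^ q^2 = a * x j + b * y j"
    and g3: "\<And>j. j < 4 \<Longrightarrow> x j ^ q^2 + y j ^ q + y j ^ q^2 = c * x j + d * y j"
    and indep: "lin_indep_over (subfield_Fq q) 4 (\<lambda>j. U_point q (x j) (y j))"
  shows False
proof (rule graph_scalar_coefficients_impossible)
  note eqs = graph_coefficient_equations[OF g2 g3 indep]
  note scalar = graph_coefficient_matrix_scalar[OF eqs(3-10)]
  have "b ^ q = b ^ q + (1 + b + c ^ q)" using eqs(1) by simp
  also have "\<dots> = b + 1" using scalar by (simp add: algebra_simps)
  finally show b1: "b ^ q = b + 1" .
  have "a ^ q = a ^ q + (a + b + d ^ q)" using eqs(2) by simp
  also have "\<dots> = a + 1" using scalar b1 by (simp add: algebra_simps)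
  finally show "a ^ q = a + 1" .
  have conj: "s ^ q = t ^ q" if "s = t" for s t :: 'a
    using that by simp
  show "a ^ q * a + b ^ q * b = 1" "a ^ q * b + b ^ q * (a + b) = 1"
    using conj[OF eqs(3)] conj[OF eqs(4)] scalar by (simp_all add: power_mult_distrib)
qed

lemma U_point_nondegenerate_plane_impossible:
  fixes h0 h1 :: "'a ^ 4" and x y :: "nat \<Rightarrow> 'a"
  assumes minor: "h0$0 * h1$1 - h0$1 * h1$0 \<noteq> 0"
    and on_plane: "\<And>j. j < 4 \<Longrightarrow> \<exists>\<alpha> \<beta>. U_point q (x j) (y j) = \<alpha> *s h0 + \<beta> *s h1"
    and indep: "lin_indep_over (subfield_Fq q) 4 (\<lambda>j. U_point q (x j) (y j))"
  shows False
proof -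
  obtain a b where ab: "\<And>\<alpha> \<beta>. (\<alpha> *s h0 + \<beta> *s h1) $ 2
      = a * (\<alpha> *s h0 + \<beta> *s h1) $ 0 + b * (\<alpha> *s h0 + \<beta> *s h1) $ 1"
    using coordinate_linear_on_plane[OF minor] by blast
  obtain c d where cd: "\<And>\<alpha> \<beta>. (\<alpha> *s h0 + \<beta> *s h1) $ 3
      = c * (\<alpha> *s h0 + \<beta> *s h1) $ 0 + d * (\<alpha> *s h0 + \<beta> *s h1) $ 1"
    using coordinate_linear_on_plane[OF minor] by blast
  have "x j ^ q + y j ^ q^2 = a * x j + b * y j \<and> x j ^ q^2 + y j ^ q + y j ^ q^2 = c * x j + d * y j"
    if j: "j < 4" for j
  proof -
    obtain \<alpha> \<beta> where w: "U_point q (x j) (y j) = \<alpha> *s h0 + \<beta> *s h1"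
      using on_plane[OF j] by blast
    let ?w = "\<alpha> *s h0 + \<beta> *s h1"
    have "x j = ?w $ 0" "y j = ?w $ 1" "x j ^ q + y j ^ q^2 = ?w $ 2"
      "x j ^ q^2 + y j ^ q + y j ^ q^2 = ?w $ 3"
      unfolding w[symmetric] by (simp_all add: U_point_def)
    then show ?thesis using ab[of \<alpha> \<beta>] cd[of \<alpha> \<beta>] by metis
  qed
  then show False using U_point_graph_impossible[OF _ _ indep] by blast
qed

lemma U_inter_plane_no_four_Fq_indep:
  fixes h0 h1 :: "'a ^ 4" and w :: "nat \<Rightarrow> 'a ^ 4"
  assumes indep_h: "\<And>\<alpha> \<beta>. \<alpha> *s h0 + \<beta> *s h1 = 0 \<Longrightarrow> \<alpha> = 0 \<and> \<beta> = 0"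
    and in_U: "\<And>j. j < 4 \<Longrightarrow> \<exists>x y. w j = U_point q x y"
    and in_plane: "\<And>j. j < 4 \<Longrightarrow> \<exists>\<alpha> \<beta>. w j = \<alpha> *s h0 + \<beta> *s h1"
    and indep: "lin_indep_over (subfield_Fq q) 4 w"
  shows False
proof -
  obtain x y where w: "\<And>j. j < 4 \<Longrightarrow> w j = U_point q (x j) (y j)"
    using in_U by metis
  have "(\<Sum>j<4. c j *s U_point q (x j) (y j)) = (\<Sum>j<4. c j *s w j)" for c
    using w by (intro sum.cong) simp_all
  then have indep': "lin_indep_over (subfield_Fq q) 4 (\<lambda>j. U_point q (x j) (y j))"
    using indep by (simp add: lin_indep_over_def)
  show False
  proof (cases "h0$0 * h1$1 - h0$1 * h1$0 = 0")
    case False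
    then show False
      using U_point_nondegenerate_plane_impossible[OF _ _ indep'] in_plane w by metis
  next
    case True
    then obtain p v where v: "v$0 = 0" "v$1 = 0" "v \<noteq> 0"
      and decomp: "\<And>\<alpha> \<beta>. \<exists>l m. \<alpha> *s h0 + \<beta> *s h1 = l *s p + m *s v"
      using plane_decomposition_if_minor_zero[OF indep_h] by (metis eq_iff_diff_eq_0)
    have "\<exists>l m. U_point q (x j) (y j) = l *s p + m *s v" if "j < 4" for j
      using in_plane[OF that] w[OF that] decomp by metis
    then obtain lam mu where "\<And>j. j < 4 \<Longrightarrow> U_point q (x j) (y j) = lam j *s p + mu j *s v"
      by metis
    then show False using U_point_degenerate_plane_impossible[OF v _ indep'] by blast
  qed
qed

lemma dim_over_Fq_U_inter_plane_le_3:
  fixes H :: "('a ^ 4) set"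
  assumes "dim_over UNIV H = 2"
  shows "dim_over (subfield_Fq q) ({U_point q x y | x y. True} \<inter> H) \<le> 3"
proof (rule dim_over_le, rule ccontr)
  obtain h0 h1 where indep_h: "\<And>\<alpha> \<beta>. \<alpha> *s h0 + \<beta> *s h1 = 0 \<Longrightarrow> \<alpha> = 0 \<and> \<beta> = 0"
    and in_plane: "\<And>u. u \<in> H \<Longrightarrow> \<exists>\<alpha> \<beta>. u = \<alpha> *s h0 + \<beta> *s h1"
    using dim_over_UNIV_eq_2_plane[OF assms] by metis
  fix n w assume w: "\<forall>i<n. w i \<in> {U_point q x y | x y. True} \<inter> H"
    and indep: "lin_indep_over (subfield_Fq q) n w" and "\<not> n \<le> 3"
  then have indep_4: "lin_indep_over (subfield_Fq q) 4 w"
    using q_gt_0 by (intro lin_indep_over_prefix[OF indep]) (simp_all add: subfield_Fq_def)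
  show False
  proof (rule U_inter_plane_no_four_Fq_indep[OF indep_h _ _ indep_4])
    fix j :: nat assume "j < 4"
    then have "w j \<in> {U_point q x y | x y. True} \<inter> H" using w \<open>\<not> n \<le> 3\<close> by simp
    then show "\<exists>x y. w j = U_point q x y" "\<exists>\<alpha> \<beta>. w j = \<alpha> *s h0 + \<beta> *s h1"
      using in_plane by blast+
  qed
qed

end

theorem theorem4p5:
  fixes h q :: nat
  assumes "odd h" and "q = 2 ^ h"
    and "CARD('a::{field,finite}) = q ^ 4"
  defines "U \<equiv> {vec4 x y (x ^ q + y ^ (q^2)) (x ^ (q^2) + y ^ q + y ^ (q^2)) | x y :: 'a. True}"
  shows "\<forall>H :: ('a ^ 4) set. subspace_over UNIV H \<and> dim_over UNIV H = 2
           \<longrightarrow> dim_over (subfield_Fq q) (U \<inter> H) \<le> 3"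
proof (intro allI impI)
  fix H :: "('a ^ 4) set"
  assume "subspace_over UNIV H \<and> dim_over UNIV H = 2"
  then have "dim_over (subfield_Fq q) ({U_point q x y | x y. True} \<inter> H) \<le> 3"
    using dim_over_Fq_U_inter_plane_le_3[OF assms(2,1,3)] by blast
  moreover have "U = {U_point q x y | x y. True}"
    by (simp add: U_def U_point_def)
  ultimately show "dim_over (subfield_Fq q) (U \<inter> H) \<le> 3" by simp
qed

end
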